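(* If RePair and MR-RePair are not run with the same MR-order, then there is a case (i.e., there exist a text $T$ and runs of the two algorithms on $T$) in which the size of the grammar generated by MR-RePair is larger than the size of the grammar generated by RePair.
   Context: Strings: $\Sigma$ is a finite ordered alphabet; the frequency of a string is its number of occurrences in the current text as a substring. A substring $s$ with frequency greater than 1 is a repeat; $s$ is a maximal repeat if $|s|\ge 2$, $s$ is a repeat, and every left extension $ws$ and every right extension $sw$ ($w$ nonempty) occurs strictly fewer times than $s$. Grammars: a (deterministic) grammar $G=\{V,\Sigma,S,R\}$ has exactly one rule $v\to \mathit{expr}$ per variable, $\mathit{expr}$ being either a symbol of $\Sigma$ or a string of previously defined variables; it derives a unique text. Its size is the total length of the right-hand sides of all its rules. RePair on text $T$: (1) replace each symbol $a$ by a new variable $v_a$ and add $v_a\to a$; (2) find a most frequent pair $p$ of the current text (ties broken arbitrarily); (3) replace every occurrence of $p$ (as many as possible when $p$ consists of two equal symbols) by a new variable $v$ and add $v\to p$; (4) if the maximum pair frequency is now 1, add $S\to$(current text) and stop, else go to (2). MR-RePair on text $T$: (1) as in RePair; (2) find a most frequent maximal repeat $r$ of the current text (ties broken arbitrarily); (3) if $|r|>2$ and $r[1]=r[|r|]$, replace $r$ by $r[2..|r|]$; (4) replace every occurrence of $r$ by a new variable $v$ and add $v\to r$; (5) if the maximum frequency of maximal repeats is now 1, add $S\to$(current text) and stop, else go to (2). MR-order: the tie-breaking choices determine, for each run, an order in which the most frequent maximal repeats at each frequency level are processed (RePair replaces consecutively the pairs lying inside a most frequent maximal repeat); this order is the MR-order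 of the run. *)

theory Defs
  imports Main
begin

text \<open>Texts are lists of symbols (natural numbers). A grammar state is a list of
  rules (variable i has right-hand side R!i) together with the current text,
  which is a list of variables.\<close>

datatype rhs = Term nat | NT "nat list"

type_synonym state = "rhs list \<times> nat list"

definition freq :: "nat list \<Rightarrow> nat list \<Rightarrow> nat" where
  "freq s w = card {i. i + length s \<le> length w \<and> take (length s) (drop i w) = s}"

definition is_maxrep :: "nat list \<Rightarrow> nat list \<Rightarrow> bool" where
  "is_maxrep r w \<longleftrightarrow> length r \<ge> 2 \<and> freq r w > 1 \<and>
     (\<forall>u. u \<noteq> [] \<longrightarrow> freq (u @ r) w < freq r w \<and> freq (r @ u) w < freq r w)"

text \<open>Left-to-right greedy replacement of all (non-overlapping) occurrences of r by v.\<close>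
function repl :: "nat list \<Rightarrow> nat \<Rightarrow> nat list \<Rightarrow> nat list" where
  "repl r v [] = []"
| "repl r v (x # xs) =
     (if r \<noteq> [] \<and> take (length r) (x # xs) = r
      then v # repl r v (drop (length r - 1) xs)
      else x # repl r v xs)"
  by pat_completeness auto
termination by (relation "measure (\<lambda>(r, v, w). length w)") auto

text \<open>Expansion of variables into terminal strings (fuel = number of rules).\<close>
fun expv :: "nat \<Rightarrow> rhs list \<Rightarrow> nat \<Rightarrow> nat list" where
  "expv 0 R v = []"
| "expv (Suc n) R v =
     (if v < length R then (case R ! v of Term a \<Rightarrow> [a] | NT vs \<Rightarrow> concat (map (expv n R) vs))
      else [])"

definition expand :: "rhs list \<Rightarrow> nat list \<Rightarrow> nat list" where
  "expand R w = concat (map (expv (length R) R) w)"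

fun rhs_len :: "rhs \<Rightarrow> nat" where
  "rhs_len (Term a) = 1"
| "rhs_len (NT vs) = length vs"

text \<open>Size of the grammar: rules for all variables plus the start rule S \<rightarrow> current text.\<close>
definition gsize :: "state \<Rightarrow> nat" where
  "gsize s = sum_list (map rhs_len (fst s)) + length (snd s)"

fun pos :: "nat list \<Rightarrow> nat \<Rightarrow> nat" where
  "pos [] a = 0"
| "pos (x # xs) a = (if x = a then 0 else Suc (pos xs a))"

definition init :: "nat list \<Rightarrow> state" where
  "init T = (map Term (remdups T), map (pos (remdups T)) T)"

text \<open>Generic runs: a run is the list of choices made in step (2).\<close>
fun run_valid :: "(state \<Rightarrow> nat list \<Rightarrow> bool) \<Rightarrow> (state \<Rightarrow> nat list \<Rightarrow> state) \<Rightarrow>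
    (state \<Rightarrow> bool) \<Rightarrow> state \<Rightarrow> nat list list \<Rightarrow> bool" where
  "run_valid ok nxt done s [] = done s"
| "run_valid ok nxt done s (c # cs) = (ok s c \<and> run_valid ok nxt done (nxt s c) cs)"

fun run_final :: "(state \<Rightarrow> nat list \<Rightarrow> state) \<Rightarrow> state \<Rightarrow> nat list list \<Rightarrow> state" where
  "run_final nxt s [] = s"
| "run_final nxt s (c # cs) = run_final nxt (nxt s c) cs"

definition rp_ok :: "state \<Rightarrow> nat list \<Rightarrow> bool" where
  "rp_ok s p \<longleftrightarrow> length p = 2 \<and> freq p (snd s) \<ge> 2 \<and>
     (\<forall>q. length q = 2 \<longrightarrow> freq q (snd s) \<le> freq p (snd s))"

definition rp_next :: "state \<Rightarrow> nat list \<Rightarrow> state" where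
  "rp_next s p = (fst s @ [NT p], repl p (length (fst s)) (snd s))"

definition rp_done :: "state \<Rightarrow> bool" where
  "rp_done s \<longleftrightarrow> (\<forall>q. length q = 2 \<longrightarrow> freq q (snd s) \<le> 1)"

definition repair_run :: "nat list \<Rightarrow> nat list list \<Rightarrow> bool" where
  "repair_run T ps = run_valid rp_ok rp_next rp_done (init T) ps"

definition repair_grammar :: "nat list \<Rightarrow> nat list list \<Rightarrow> state" where
  "repair_grammar T ps = run_final rp_next (init T) ps"

definition mr_ok :: "state \<Rightarrow> nat list \<Rightarrow> bool" where
  "mr_ok s r \<longleftrightarrow> is_maxrep r (snd s) \<and>
     (\<forall>r'. is_maxrep r' (snd s) \<longrightarrow> freq r' (snd s) \<le> freq r (snd s))"

definition mr_trim :: "nat list \<Rightarrow> nat list" where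
  "mr_trim r = (if length r > 2 \<and> hd r = last r then tl r else r)"

definition mr_next :: "state \<Rightarrow> nat list \<Rightarrow> state" where
  "mr_next s r = (fst s @ [NT (mr_trim r)], repl (mr_trim r) (length (fst s)) (snd s))"

definition mr_done :: "state \<Rightarrow> bool" where
  "mr_done s \<longleftrightarrow> (\<forall>r. \<not> is_maxrep r (snd s))"

definition mrrepair_run :: "nat list \<Rightarrow> nat list list \<Rightarrow> bool" where
  "mrrepair_run T rs = run_valid mr_ok mr_next mr_done (init T) rs"

definition mrrepair_grammar :: "nat list \<Rightarrow> nat list list \<Rightarrow> state" where
  "mrrepair_grammar T rs = run_final mr_next (init T) rs"

fun mr_seq :: "state \<Rightarrow> nat list list \<Rightarrow> nat list list" where
  "mr_seq s [] = []"
| "mr_seq s (r # rs) = expand (fst s) r # mr_seq (mr_next s r) rs"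

definition mrrepair_order :: "nat list \<Rightarrow> nat list list \<Rightarrow> nat list list" where
  "mrrepair_order T rs = remdups_adj (mr_seq (init T) rs)"

text \<open>The most frequent maximal repeat(s) inside which RePair's chosen pair lies.\<close>
definition rp_cands :: "state \<Rightarrow> nat list \<Rightarrow> nat list set" where
  "rp_cands s p = {expand (fst s) r | r. is_maxrep r (snd s) \<and> freq r (snd s) = freq p (snd s)
                     \<and> (\<exists>u v. r = u @ p @ v)}"

fun rp_seqs :: "state \<Rightarrow> nat list list \<Rightarrow> nat list list set" where
  "rp_seqs s [] = {[]}"
| "rp_seqs s (p # ps) = {x # xs | x xs. x \<in> rp_cands s p \<and> xs \<in> rp_seqs (rp_next s p) ps}"

definition repair_orders :: "nat list \<Rightarrow> nat list list \<Rightarrow> nat list list set" where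
  "repair_orders T ps = remdups_adj ` rp_seqs (init T) ps"

end

theory Submission
  imports Defs "HOL-Library.Sublist"
begin

text \<open>Take \<open>T = aaabab\<close> (with \<open>a = 0\<close>, \<open>b = 1\<close>). The pairs \<open>aa\<close> and \<open>ab\<close> both occur
  twice and both are maximal repeats, so the tie-breaking rules admit different choices.
  RePair may replace \<open>ab\<close>, leaving \<open>aaXX\<close> without repeated pairs: size \<open>2 + 2 + 4 = 8\<close>,
  and since \<open>ab\<close> is the only maximal repeat containing \<open>ab\<close>, its only MR-order is \<open>ab\<close>.
  MR-RePair may replace \<open>aa\<close> and then \<open>ab\<close>, leaving \<open>YZZ\<close>: size \<open>2 + 2 + 2 + 3 = 9\<close>,
  with MR-order \<open>aa, ab\<close>.

  The definitions quantify over all strings, but strings that are not substrings of the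
  current text have frequency 0; restricting the quantifiers accordingly yields code
  equations, and the concrete runs are then checked by evaluation.\<close>

lemma freq_eq_0_if_not_sublist:
  assumes "\<not> sublist s w"
  shows "freq s w = 0"
proof -
  have "take (length s) (drop i w) \<noteq> s" for i
    using assms sublist_order.order_trans[OF sublist_take sublist_drop] by metis
  then show ?thesis
    unfolding freq_def by simp
qed

lemma freq_eq_length_filter [code]:
  "freq s w = length (filter (\<lambda>i. i + length s \<le> length w \<and> take (length s) (drop i w) = s)
                        [0..<Suc (length w)])"
proof -
  let ?P = "\<lambda>i. i + length s \<le> length w \<and> take (length s) (drop i w) = s"
  have "freq s w = card (set (filter ?P [0..<Suc (length w)]))"
    unfolding freq_def by (rule arg_cong[where f = card]) (auto simp del: upt_Suc)
  also have "\<dots> = length (filter ?P [0..<Suc (length w)])"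
    by (rule distinct_card) simp
  finally show ?thesis .
qed

lemma is_maxrep_iff_sublists [code]:
  "is_maxrep r w \<longleftrightarrow> 2 \<le> length r \<and> 1 < freq r w \<and>
     (\<forall>u \<in> set (sublists w). u \<noteq> [] \<longrightarrow> freq (u @ r) w < freq r w \<and> freq (r @ u) w < freq r w)"
  (is "_ \<longleftrightarrow> ?rhs")
proof
  assume "is_maxrep r w"
  then show "?rhs" by (simp add: is_maxrep_def)
next
  assume rhs: "?rhs"
  have "freq (u @ r) w < freq r w \<and> freq (r @ u) w < freq r w" if "u \<noteq> []" for u
  proof (cases "sublist u w")
    case True
    then show ?thesis using rhs \<open>u \<noteq> []\<close> by simp
  next
    case False
    then have "\<not> sublist (u @ r) w" "\<not> sublist (r @ u) w"
      using sublist_order.order_trans[of u _ w] by auto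
    then show ?thesis
      using rhs by (simp add: freq_eq_0_if_not_sublist)
  qed
  with rhs show "is_maxrep r w"
    unfolding is_maxrep_def by simp
qed

lemma sublist_if_is_maxrep:
  assumes "is_maxrep r w"
  shows "sublist r w"
proof (rule ccontr)
  assume "\<not> sublist r w"
  then have "freq r w = 0" by (rule freq_eq_0_if_not_sublist)
  with assms show False by (simp add: is_maxrep_def)
qed

lemma all_freq_le_iff_sublists:
  "(\<forall>q. P q \<longrightarrow> freq q w \<le> k) \<longleftrightarrow> (\<forall>q \<in> set (sublists w). P q \<longrightarrow> freq q w \<le> k)"
  using freq_eq_0_if_not_sublist by fastforce

lemma rp_ok_iff_sublists [code]:
  "rp_ok s p \<longleftrightarrow> length p = 2 \<and> 2 \<le> freq p (snd s) \<and>
     (\<forall>q \<in> set (sublists (snd s)). length q = 2 \<longrightarrow> freq q (snd s) \<le> freq p (snd s))"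
  unfolding rp_ok_def all_freq_le_iff_sublists ..

lemma rp_done_iff_sublists [code]:
  "rp_done s \<longleftrightarrow> (\<forall>q \<in> set (sublists (snd s)). length q = 2 \<longrightarrow> freq q (snd s) \<le> 1)"
  unfolding rp_done_def all_freq_le_iff_sublists ..

lemma mr_ok_iff_sublists [code]:
  "mr_ok s r \<longleftrightarrow> is_maxrep r (snd s) \<and>
     (\<forall>r' \<in> set (sublists (snd s)). is_maxrep r' (snd s) \<longrightarrow> freq r' (snd s) \<le> freq r (snd s))"
  unfolding mr_ok_def using sublist_if_is_maxrep by auto

lemma mr_done_iff_sublists [code]:
  "mr_done s \<longleftrightarrow> (\<forall>r \<in> set (sublists (snd s)). \<not> is_maxrep r (snd s))"
  unfolding mr_done_def using sublist_if_is_maxrep by auto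

lemma rp_cands_eq_image_sublists [code]:
  "rp_cands s p = expand (fst s) ` set (filter (\<lambda>r. is_maxrep r (snd s) \<and>
     freq r (snd s) = freq p (snd s) \<and> sublist p r) (sublists (snd s)))"
  unfolding rp_cands_def sublist_def[of p] using sublist_if_is_maxrep by auto

lemma rp_seqs_Cons_eq_image [code]:
  "rp_seqs s (p # ps) = (\<lambda>(x, xs). x # xs) ` (rp_cands s p \<times> rp_seqs (rp_next s p) ps)"
  by auto

(* Explicit code equations replace the default ones, so the Nil case is needed again. *)
declare rp_seqs.simps(1) [code]

lemma repair_run_aaabab: "repair_run [0, 0, 0, 1, 0, 1] [[0, 1]]"
  unfolding repair_run_def by code_simp

lemma repair_grammar_aaabab:
  "repair_grammar [0, 0, 0, 1, 0, 1] [[0, 1]] = ([Term 0, Term 1, NT [0, 1]], [0, 0, 2, 2])"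
  unfolding repair_grammar_def by code_simp

lemma repair_orders_aaabab: "repair_orders [0, 0, 0, 1, 0, 1] [[0, 1]] = {[[0, 1]]}"
  unfolding repair_orders_def by code_simp

lemma mrrepair_run_aaabab: "mrrepair_run [0, 0, 0, 1, 0, 1] [[0, 0], [0, 1]]"
  unfolding mrrepair_run_def by code_simp

lemma mrrepair_grammar_aaabab:
  "mrrepair_grammar [0, 0, 0, 1, 0, 1] [[0, 0], [0, 1]] =
     ([Term 0, Term 1, NT [0, 0], NT [0, 1]], [2, 3, 3])"
  unfolding mrrepair_grammar_def by code_simp

lemma mrrepair_order_aaabab: "mrrepair_order [0, 0, 0, 1, 0, 1] [[0, 0], [0, 1]] = [[0, 0], [0, 1]]"
  unfolding mrrepair_order_def by code_simp

theorem mainTheorem3: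
  shows "\<exists>T ps rs. repair_run T ps \<and> mrrepair_run T rs \<and>
           repair_orders T ps \<noteq> {} \<and>
           (\<forall>ord \<in> repair_orders T ps. ord \<noteq> mrrepair_order T rs) \<and>
           gsize (mrrepair_grammar T rs) > gsize (repair_grammar T ps)"
proof (intro exI conjI)
  let ?T = "[0, 0, 0, 1, 0, 1] :: nat list"
  show "repair_run ?T [[0, 1]]" and "mrrepair_run ?T [[0, 0], [0, 1]]"
    by (fact repair_run_aaabab mrrepair_run_aaabab)+
  show "repair_orders ?T [[0, 1]] \<noteq> {}"
    and "\<forall>ord \<in> repair_orders ?T [[0, 1]]. ord \<noteq> mrrepair_order ?T [[0, 0], [0, 1]]"
    unfolding repair_orders_aaabab mrrepair_order_aaabab by simp_all
  show "gsize (mrrepair_grammar ?T [[0, 0], [0, 1]]) > gsize (repair_grammar ?T [[0, 1]])"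
    unfolding mrrepair_grammar_aaabab repair_grammar_aaabab gsize_def by simp
qed

end
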